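(* Let $n\ge 2$, $N=2^n$, $s=(N-1)/2$. Consider the unrestricted close Hadamard problem: given oracle access (via $\hat U_z$) to a string $z\in C=A\cup B$, where $A=\Xi^{(N)}_{N/2-1}$ and $B=\bigcup_{k=0}^{N/2-2}\Xi^{(N)}_k$, decide whether $z\in A$ or $z\in B$. For every $\delta>0$ there is a number $q$ depending only on $\delta$ (not on $n$) and a quantum algorithm making $q$ queries to $\hat U_z$ that, for every $z\in C$, decides correctly with error probability at most $\delta$; the algorithm consists of $q$ independent runs of the circuit that prepares $\tfrac1{\sqrt2}(|\tfrac12\rangle_s+|-\tfrac12\rangle_s)$, applies $\hat H^{\otimes n}$, $\hat U_z$, $\hat H^{\otimes n}$ (followed by a fixed $z$-independent unitary) and measures in the spin basis, together with classical post-processing of the outcomes.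
   Context: Work in $\mathbb{C}^N$ with computational basis $\{|y\rangle : y=0,\dots,N-1\}$; spin basis states $|m\rangle_s$, $m\in\{-s,\dots,s\}$, are identified via $|m\rangle_s=|m+s\rangle$. For $x,y\in\{0,\dots,N-1\}$, $x\cdot y\in\{0,1\}$ is the mod-2 inner product of their $n$-bit binary expansions; $\hat H^{\otimes n}|y\rangle=N^{-1/2}\sum_x(-1)^{x\cdot y}|x\rangle$. The Hadamard codeword $W^{(N)}_j\in\{0,1\}^N$ has bit $x\cdot j$ at position $x$. For $z\in\{0,1\}^N$ the oracle is the diagonal unitary $\hat U_z|x\rangle=(-1)^{z_x}|x\rangle$; a query is one application of $\hat U_z$. The set $\Xi^{(N)}_j$ (codewords with unrestricted errors) consists of all strings $z\in\{0,1\}^N$ at Hamming distance strictly less than $N/16$ from $W^{(N)}_j$. *)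

theory Defs
  imports "HOL-Analysis.Analysis"
begin

(* States of C^N are functions nat => complex; only indices y < N matter.
  Binary strings z in {0,1}^N are functions nat => bool; only positions x < N matter. *)

definition bdot :: "nat \<Rightarrow> nat \<Rightarrow> nat \<Rightarrow> nat" where
  "bdot n x y = (\<Sum>i<n. (if bit x i \<and> bit y i then 1 else 0)) mod 2"

definition hadamard_n :: "nat \<Rightarrow> (nat \<Rightarrow> complex) \<Rightarrow> (nat \<Rightarrow> complex)" where
  "hadamard_n n \<psi> = (\<lambda>x. (1 / complex_of_real (sqrt (2 ^ n))) *
      (\<Sum>y<2^n. (-1) ^ (bdot n x y) * \<psi> y))"

definition codeword :: "nat \<Rightarrow> nat \<Rightarrow> nat \<Rightarrow> bool" where
  "codeword n j = (\<lambda>x. bdot n x j = 1)"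

definition hamming :: "nat \<Rightarrow> (nat \<Rightarrow> bool) \<Rightarrow> (nat \<Rightarrow> bool) \<Rightarrow> nat" where
  "hamming N z w = card {x. x < N \<and> z x \<noteq> w x}"

definition Xi :: "nat \<Rightarrow> nat \<Rightarrow> (nat \<Rightarrow> bool) set" where
  "Xi n j = {z. real (hamming (2^n) z (codeword n j)) < real (2^n) / 16}"

definition oracle_U :: "(nat \<Rightarrow> bool) \<Rightarrow> (nat \<Rightarrow> complex) \<Rightarrow> (nat \<Rightarrow> complex)" where
  "oracle_U z \<psi> = (\<lambda>x. (if z x then -1 else 1) * \<psi> x)"

(* Spin basis state |m>_s with s = (N-1)/2, identified with |m+s>. *)
definition spin_ket :: "nat \<Rightarrow> real \<Rightarrow> (nat \<Rightarrow> complex)" where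
  "spin_ket N m = (\<lambda>y. if real y = m + (real N - 1) / 2 then 1 else 0)"

definition init_state :: "nat \<Rightarrow> (nat \<Rightarrow> complex)" where
  "init_state N = (\<lambda>y. (1 / complex_of_real (sqrt 2)) *
      (spin_ket N (1/2) y + spin_ket N (-1/2) y))"

definition unitary_mat :: "nat \<Rightarrow> (nat \<Rightarrow> nat \<Rightarrow> complex) \<Rightarrow> bool" where
  "unitary_mat N V \<longleftrightarrow> (\<forall>i<N. \<forall>j<N. (\<Sum>k<N. cnj (V k i) * V k j) = (if i = j then 1 else 0))"

definition apply_mat :: "nat \<Rightarrow> (nat \<Rightarrow> nat \<Rightarrow> complex) \<Rightarrow> (nat \<Rightarrow> complex) \<Rightarrow> (nat \<Rightarrow> complex)" where
  "apply_mat N V \<psi> = (\<lambda>y. \<Sum>x<N. V y x * \<psi> x)"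

definition final_state :: "nat \<Rightarrow> (nat \<Rightarrow> nat \<Rightarrow> complex) \<Rightarrow> (nat \<Rightarrow> bool) \<Rightarrow> (nat \<Rightarrow> complex)" where
  "final_state n V z =
     apply_mat (2^n) V (hadamard_n n (oracle_U z (hadamard_n n (init_state (2^n)))))"

definition outcome_prob :: "nat \<Rightarrow> (nat \<Rightarrow> nat \<Rightarrow> complex) \<Rightarrow> (nat \<Rightarrow> bool) \<Rightarrow> nat \<Rightarrow> real" where
  "outcome_prob n V z y = (cmod (final_state n V z y))^2"

definition outcome_seqs :: "nat \<Rightarrow> nat \<Rightarrow> nat list set" where
  "outcome_seqs N q = {ys. length ys = q \<and> set ys \<subseteq> {..<N}}"

definition runs_prob :: "nat \<Rightarrow> (nat \<Rightarrow> nat \<Rightarrow> complex) \<Rightarrow> (nat \<Rightarrow> bool) \<Rightarrow> nat \<Rightarrow> (nat list \<Rightarrow> bool) \<Rightarrow> real" where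
  "runs_prob n V z q P = (\<Sum>ys\<in>{ys\<in>outcome_seqs (2^n) q. P ys}. prod_list (map (outcome_prob n V z) ys))"

definition setA :: "nat \<Rightarrow> (nat \<Rightarrow> bool) set" where
  "setA n = Xi n (2^n div 2 - 1)"

definition setB :: "nat \<Rightarrow> (nat \<Rightarrow> bool) set" where
  "setB n = (\<Union>k\<in>{0..2^n div 2 - 2}. Xi n k)"

end

theory Submission
  imports Defs
begin

(* Take the final unitary to be the identity and look only at outcome 0. Since H^n|0> is
  uniform, the amplitude of 0 is <(-1)^z, chi_(N/2) + chi_(N/2-1)> / (sqrt 2 N), with chi_j the
  Walsh characters. By their orthogonality this correlation is N for the codeword W_(N/2-1)
  and 0 for every W_k with k <= N/2-2, and each flipped bit moves it by at most 4. Hence fewer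
  than N/16 errors keep the probability of outcome 0 at least 9/32 on A and at most 1/32 on B,
  and counting zeros among q runs against the threshold 5q/32 errs, by Chebyshev's inequality,
  with probability at most 16/q, whatever n is. *)

definition walsh :: "nat \<Rightarrow> nat \<Rightarrow> nat \<Rightarrow> real" where
  "walsh n x y = (-1) ^ bdot n x y"

lemma walsh_eq_parity: "walsh n x y = (-1) ^ (\<Sum>i<n. if bit x i \<and> bit y i then 1 else 0)"
  unfolding walsh_def bdot_def by (simp add: minus_one_power_iff)

lemma walsh_0 [simp]: "walsh 0 x y = 1"
  by (simp add: walsh_eq_parity)

lemma walsh_zero_left [simp]: "walsh n 0 y = 1"
  by (simp add: walsh_eq_parity)

lemma abs_walsh [simp]: "\<bar>walsh n x y\<bar> = 1"
  by (simp add: walsh_def)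

lemma walsh_Suc:
  "walsh (Suc n) x y = (if odd x \<and> odd y then -1 else 1) * walsh n (x div 2) (y div 2)"
  unfolding walsh_eq_parity sum.lessThan_Suc_shift by (simp add: power_add bit_Suc bit_0)

lemma sum_lessThan_double:
  "(\<Sum>x<2 * m. f x) = (\<Sum>i<m. f (2 * i)) + (\<Sum>i<m. f (2 * i + 1 :: nat))"
  by (induction m) (simp_all add: algebra_simps)

lemma walsh_orthogonal:
  assumes "j < 2 ^ n" "k < 2 ^ n"
  shows "(\<Sum>x<2 ^ n. walsh n x j * walsh n x k) = (if j = k then 2 ^ n else 0)"
  using assms
proof (induction n arbitrary: j k)
  case 0
  then show ?case by simp
next
  case (Suc n)
  let ?\<epsilon> = "\<lambda>i::nat. if odd i then -1 else 1 :: real"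
  have "(\<Sum>x<2 ^ Suc n. walsh (Suc n) x j * walsh (Suc n) x k)
      = (1 + ?\<epsilon> j * ?\<epsilon> k) * (\<Sum>x<2 ^ n. walsh n x (j div 2) * walsh n x (k div 2))"
    unfolding power_Suc sum_lessThan_double walsh_Suc
    by (simp add: algebra_simps sum.distrib sum_distrib_left sum_negf)
  also have "\<dots> = (if (even j \<longleftrightarrow> even k) \<and> j div 2 = k div 2 then 2 ^ Suc n else 0)"
    using Suc by simp
  also have "\<dots> = (if j = k then 2 ^ Suc n else 0)"
    by (simp only: bit_eq_rec[of j k])
  finally show ?case .
qed

lemma hadamard_n_walsh:
  "hadamard_n n \<psi> x = of_real (1 / sqrt (2 ^ n)) * (\<Sum>y<2 ^ n. of_real (walsh n x y) * \<psi> y)"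
  unfolding hadamard_n_def walsh_def by simp

lemma hadamard_n_inner_self:
  "(\<Sum>x<2 ^ n. hadamard_n n \<psi> x * cnj (hadamard_n n \<psi> x)) = (\<Sum>y<2 ^ n. \<psi> y * cnj (\<psi> y))"
proof -
  define c where "c = complex_of_real (1 / 2 ^ n)"
  have "(\<Sum>x<2 ^ n. hadamard_n n \<psi> x * cnj (hadamard_n n \<psi> x))
      = (\<Sum>x<2 ^ n. \<Sum>y'<2 ^ n. \<Sum>y<2 ^ n.
           c * (of_real (walsh n x y * walsh n x y') * (\<psi> y * cnj (\<psi> y'))))"
  proof -
    have "complex_of_real (sqrt 2) ^ n * complex_of_real (sqrt 2) ^ n = 2 ^ n"
      by (simp flip: power_mult_distrib of_real_mult)
    then show ?thesis
      unfolding hadamard_n_walsh c_def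
      by (simp add: cnj_sum sum_product sum_distrib_left algebra_simps real_sqrt_power)
  qed
  also have "\<dots> = (\<Sum>y'<2 ^ n. \<Sum>y<2 ^ n.
           c * (of_real (\<Sum>x<2 ^ n. walsh n x y * walsh n x y') * (\<psi> y * cnj (\<psi> y'))))"
    by (subst sum.swap, rule sum.cong[OF refl], subst sum.swap)
       (simp add: sum_distrib_left sum_distrib_right)
  also have "\<dots> = (\<Sum>y'<2 ^ n. \<Sum>y<2 ^ n. if y = y' then \<psi> y * cnj (\<psi> y') else 0)"
    by (intro sum.cong refl) (simp add: walsh_orthogonal c_def)
  also have "\<dots> = (\<Sum>y<2 ^ n. \<psi> y * cnj (\<psi> y))"
    by (simp add: sum.swap[of _ "{..<2 ^ n}"])
  finally show ?thesis .
qed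

lemma hadamard_n_norm:
  "(\<Sum>x<2 ^ n. (cmod (hadamard_n n \<psi> x))\<^sup>2) = (\<Sum>y<2 ^ n. (cmod (\<psi> y))\<^sup>2)"
proof -
  have "complex_of_real (\<Sum>x<2 ^ n. (cmod (hadamard_n n \<psi> x))\<^sup>2)
      = complex_of_real (\<Sum>y<2 ^ n. (cmod (\<psi> y))\<^sup>2)"
    unfolding of_real_sum complex_norm_square hadamard_n_inner_self ..
  then show ?thesis
    by (simp only: of_real_eq_iff)
qed

lemma finite_outcome_seqs: "finite (outcome_seqs N q)"
proof -
  have "outcome_seqs N q = {xs. set xs \<subseteq> {..<N} \<and> length xs = q}"
    unfolding outcome_seqs_def by auto
  then show ?thesis
    by (simp add: finite_lists_length_eq)
qed

lemma outcome_seqs_0 [simp]: "outcome_seqs N 0 = {[]}"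
  by (auto simp: outcome_seqs_def)

lemma outcome_seqs_Suc:
  "outcome_seqs N (Suc q) = (\<lambda>(y, ys). y # ys) ` ({..<N} \<times> outcome_seqs N q)"
proof
  show "outcome_seqs N (Suc q) \<subseteq> (\<lambda>(y, ys). y # ys) ` ({..<N} \<times> outcome_seqs N q)"
  proof
    fix xs
    assume "xs \<in> outcome_seqs N (Suc q)"
    then obtain y ys where "xs = y # ys" "y < N" "ys \<in> outcome_seqs N q"
      unfolding outcome_seqs_def by (cases xs) auto
    then show "xs \<in> (\<lambda>(y, ys). y # ys) ` ({..<N} \<times> outcome_seqs N q)"
      by force
  qed
qed (auto simp: outcome_seqs_def)

lemma sum_outcome_seqs_Suc:
  "(\<Sum>ys\<in>outcome_seqs N (Suc q). f ys) = (\<Sum>y<N. \<Sum>ys\<in>outcome_seqs N q. f (y # ys))"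
proof -
  have "inj_on (\<lambda>(y, ys). y # ys) ({..<N} \<times> outcome_seqs N q)"
    by (auto simp: inj_on_def)
  then show ?thesis
    unfolding outcome_seqs_Suc by (simp add: sum.reindex sum.cartesian_product split_def)
qed

context
  fixes p :: "nat \<Rightarrow> real" and N a :: nat
  assumes sum_p: "(\<Sum>y<N. p y) = 1" and a_less: "a < N"
begin

abbreviation seq_prob :: "nat list \<Rightarrow> real" where
  "seq_prob ys \<equiv> prod_list (map p ys)"

abbreviation hits :: "nat list \<Rightarrow> real" where
  "hits ys \<equiv> real (count_list ys a)"

lemma sum_outcome_seqs_Suc_weighted:
  "(\<Sum>ys\<in>outcome_seqs N (Suc q). seq_prob ys * f ys)
     = (\<Sum>y<N. p y * (\<Sum>ys\<in>outcome_seqs N q. seq_prob ys * f (y # ys)))"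
  unfolding sum_outcome_seqs_Suc by (simp add: sum_distrib_left mult.assoc)

lemma sum_seq_prob: "(\<Sum>ys\<in>outcome_seqs N q. seq_prob ys) = 1"
proof (induction q)
  case (Suc q)
  then show ?case
    using sum_outcome_seqs_Suc_weighted[where f = "\<lambda>_. 1"] by (simp add: sum_p)
qed simp

lemma sum_p_of_bool: "(\<Sum>y<N. p y * of_bool (y = a)) = p a"
  using a_less by (simp add: of_bool_def if_distrib[of "(*) (p _)"] cong: if_cong)

lemma hits_first_moment: "(\<Sum>ys\<in>outcome_seqs N q. seq_prob ys * hits ys) = q * p a"
proof (induction q)
  case (Suc q)
  have step: "(\<Sum>ys\<in>outcome_seqs N q. seq_prob ys * hits (y # ys)) = of_bool (y = a) + q * p a"
    for y
  proof -
    have "(\<Sum>ys\<in>outcome_seqs N q. seq_prob ys * hits (y # ys))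
        = of_bool (y = a) * (\<Sum>ys\<in>outcome_seqs N q. seq_prob ys)
          + (\<Sum>ys\<in>outcome_seqs N q. seq_prob ys * hits ys)"
      by (simp add: of_bool_def sum.distrib sum_distrib_left distrib_left)
    then show ?thesis
      by (simp only: sum_seq_prob Suc.IH mult_1_right)
  qed
  have "(\<Sum>y<N. p y * (of_bool (y = a) + q * p a)) = p a + q * p a"
    by (simp add: distrib_left sum.distrib sum_p_of_bool flip: sum_distrib_right) (simp add: sum_p)
  then show ?case
    unfolding sum_outcome_seqs_Suc_weighted step by (simp add: algebra_simps)
qed simp

lemma hits_second_moment:
  "(\<Sum>ys\<in>outcome_seqs N q. seq_prob ys * (hits ys)\<^sup>2) = q * p a + q * (real q - 1) * (p a)\<^sup>2"
proof (induction q)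
  case (Suc q)
  have step: "(\<Sum>ys\<in>outcome_seqs N q. seq_prob ys * (hits (y # ys))\<^sup>2)
      = of_bool (y = a) * (1 + 2 * (q * p a)) + (q * p a + q * (real q - 1) * (p a)\<^sup>2)" for y
  proof -
    have "(\<Sum>ys\<in>outcome_seqs N q. seq_prob ys * (hits (y # ys))\<^sup>2)
        = of_bool (y = a) * ((\<Sum>ys\<in>outcome_seqs N q. seq_prob ys)
            + 2 * (\<Sum>ys\<in>outcome_seqs N q. seq_prob ys * hits ys))
          + (\<Sum>ys\<in>outcome_seqs N q. seq_prob ys * (hits ys)\<^sup>2)"
      by (simp add: of_bool_def power2_eq_square algebra_simps sum.distrib sum_distrib_left)
    then show ?thesis
      by (simp only: sum_seq_prob hits_first_moment Suc.IH)
  qed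
  have "(\<Sum>y<N. p y * (of_bool (y = a) * (1 + 2 * (q * p a)) + (q * p a + q * (real q - 1) * (p a)\<^sup>2)))
      = p a * (1 + 2 * (q * p a)) + (q * p a + q * (real q - 1) * (p a)\<^sup>2)"
    by (simp add: distrib_left sum.distrib mult.assoc[symmetric] sum_p
        flip: sum_distrib_right) (use a_less in \<open>simp add: Int_absorb1\<close>)
  then show ?case
    unfolding sum_outcome_seqs_Suc_weighted step by (simp add: algebra_simps power2_eq_square)
qed simp

lemma hits_variance:
  "(\<Sum>ys\<in>outcome_seqs N q. seq_prob ys * (hits ys - q * p a)\<^sup>2) = q * p a * (1 - p a)"
proof -
  have "(\<Sum>ys\<in>outcome_seqs N q. seq_prob ys * (hits ys - q * p a)\<^sup>2)
      = (\<Sum>ys\<in>outcome_seqs N q. seq_prob ys * (hits ys)\<^sup>2)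
        - 2 * (q * p a) * (\<Sum>ys\<in>outcome_seqs N q. seq_prob ys * hits ys)
        + (q * p a)\<^sup>2 * (\<Sum>ys\<in>outcome_seqs N q. seq_prob ys)"
    by (simp add: power2_eq_square algebra_simps sum.distrib sum_subtractf sum_distrib_left)
  also have "\<dots> = q * p a * (1 - p a)"
    unfolding sum_seq_prob hits_first_moment hits_second_moment
    by (simp add: algebra_simps power2_eq_square)
  finally show ?thesis .
qed

lemma hits_deviation_prob_le:
  assumes p_nonneg: "\<And>y. 0 \<le> p y" and t_pos: "0 < t"
    and deviates: "\<And>ys. P ys \<Longrightarrow> t \<le> \<bar>hits ys - q * p a\<bar>"
  shows "(\<Sum>ys\<in>{ys\<in>outcome_seqs N q. P ys}. seq_prob ys) \<le> q / (4 * t\<^sup>2)"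
proof -
  have seq_prob_nonneg: "0 \<le> seq_prob ys" for ys
    using p_nonneg by (induction ys) auto
  have "(\<Sum>ys\<in>{ys\<in>outcome_seqs N q. P ys}. seq_prob ys)
      \<le> (\<Sum>ys\<in>{ys\<in>outcome_seqs N q. P ys}. seq_prob ys * (hits ys - q * p a)\<^sup>2 / t\<^sup>2)"
  proof (rule sum_mono)
    fix ys
    assume "ys \<in> {ys\<in>outcome_seqs N q. P ys}"
    then have "t\<^sup>2 \<le> \<bar>hits ys - q * p a\<bar>\<^sup>2"
      using deviates t_pos by (intro power_mono) auto
    then have "t\<^sup>2 \<le> (hits ys - q * p a)\<^sup>2"
      by simp
    then show "seq_prob ys \<le> seq_prob ys * (hits ys - q * p a)\<^sup>2 / t\<^sup>2"
      using seq_prob_nonneg[of ys] t_pos by (simp add: field_simps mult_left_mono)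
  qed
  also have "\<dots> \<le> (\<Sum>ys\<in>outcome_seqs N q. seq_prob ys * (hits ys - q * p a)\<^sup>2 / t\<^sup>2)"
    by (rule sum_mono2) (auto simp: finite_outcome_seqs seq_prob_nonneg)
  also have "\<dots> = q * (p a * (1 - p a)) / t\<^sup>2"
    by (simp add: hits_variance flip: sum_divide_distrib)
  also have "\<dots> \<le> q * (1 / 4) / t\<^sup>2"
  proof -
    have "p a * (1 - p a) \<le> 1 / 4"
      using zero_le_power2[of "2 * p a - 1"] by (simp add: power2_eq_square algebra_simps)
    then show ?thesis
      by (intro divide_right_mono mult_left_mono) auto
  qed
  finally show ?thesis
    by simp
qed

lemma threshold_test_error:
  assumes p_nonneg: "\<And>y. 0 \<le> p y" and "lo < hi" and gap: "p a \<le> lo \<or> hi \<le> p a"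
    and q_pos: "0 < q"
  shows "(\<Sum>ys\<in>{ys\<in>outcome_seqs N q. ((lo + hi) / 2 * q \<le> hits ys) \<noteq> (hi \<le> p a)}. seq_prob ys)
           \<le> 1 / ((hi - lo)\<^sup>2 * q)"
proof -
  let ?t = "(hi - lo) / 2 * q"
  have "?t \<le> \<bar>hits ys - q * p a\<bar>" if "((lo + hi) / 2 * q \<le> hits ys) \<noteq> (hi \<le> p a)" for ys
  proof (cases "hi \<le> p a")
    case True
    then have "q * hi \<le> q * p a"
      by (simp add: mult_left_mono)
    with True that show ?thesis
      by (simp add: field_simps abs_if)
  next
    case False
    then have "q * p a \<le> q * lo"
      using gap by (simp add: mult_left_mono)
    with False that show ?thesis
      by (simp add: field_simps abs_if)
  qed
  moreover have "0 < ?t"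
    using \<open>lo < hi\<close> q_pos by simp
  ultimately have "(\<Sum>ys\<in>{ys\<in>outcome_seqs N q. ((lo + hi) / 2 * q \<le> hits ys) \<noteq> (hi \<le> p a)}.
      seq_prob ys) \<le> q / (4 * ?t\<^sup>2)"
    by (intro hits_deviation_prob_le p_nonneg)
  also have "\<dots> = 1 / ((hi - lo)\<^sup>2 * q)"
    using q_pos by (simp add: power_mult_distrib power_divide power2_eq_square)
  finally show ?thesis .
qed

end

lemma spin_indices:
  "(2::nat) ^ m < 2 ^ Suc m" "(2::nat) ^ m - 1 < 2 ^ Suc m" "(2::nat) ^ m \<noteq> 2 ^ m - 1"
proof -
  obtain k where "(2::nat) ^ m = Suc k"
    using not0_implies_Suc[of "(2::nat) ^ m"] by auto
  then show "(2::nat) ^ m < 2 ^ Suc m" "(2::nat) ^ m - 1 < 2 ^ Suc m" "(2::nat) ^ m \<noteq> 2 ^ m - 1"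
    by auto
qed

lemma spin_ket_plus_half: "spin_ket (2 ^ Suc m) (1 / 2) y = (if y = 2 ^ m then 1 else 0)"
proof -
  have "1 / 2 + (real (2 ^ Suc m) - 1) / 2 = real ((2::nat) ^ m)"
    by (simp add: field_simps)
  then show ?thesis
    unfolding spin_ket_def by (metis of_nat_eq_iff)
qed

lemma spin_ket_minus_half: "spin_ket (2 ^ Suc m) (- 1 / 2) y = (if y = 2 ^ m - 1 then 1 else 0)"
proof -
  have "- 1 / 2 + (real (2 ^ Suc m) - 1) / 2 = real ((2::nat) ^ m - 1)"
    by (simp add: of_nat_diff field_simps)
  then show ?thesis
    unfolding spin_ket_def by (metis of_nat_eq_iff)
qed

lemma init_state_eq:
  "init_state (2 ^ Suc m) y
     = (if y = 2 ^ m then of_real (1 / sqrt 2) else 0) + (if y = 2 ^ m - 1 then of_real (1 / sqrt 2) else 0)"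
  unfolding init_state_def spin_ket_plus_half spin_ket_minus_half by simp

lemma init_state_norm: "(\<Sum>y<2 ^ Suc m. (cmod (init_state (2 ^ Suc m) y))\<^sup>2) = 1"
proof -
  have "(\<Sum>y<2 ^ Suc m. (cmod (init_state (2 ^ Suc m) y))\<^sup>2)
      = (\<Sum>y::nat<2 ^ Suc m. (if y = 2 ^ m then 1 / 2 else 0) + (if y = 2 ^ m - 1 then 1 / 2 else 0))"
    unfolding init_state_eq using spin_indices(3)[of m]
    by (intro sum.cong refl) (auto simp: power_divide norm_divide)
  also have "\<dots> = 1"
    using spin_indices[of m] by (simp add: sum.distrib)
  finally show ?thesis .
qed

lemma hadamard_init_state:
  "hadamard_n (Suc m) (init_state (2 ^ Suc m)) x
     = of_real ((walsh (Suc m) x (2 ^ m) + walsh (Suc m) x (2 ^ m - 1)) / (sqrt (2 ^ Suc m) * sqrt 2))"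
proof -
  have "(\<Sum>y<2 ^ Suc m. complex_of_real (walsh (Suc m) x y) * init_state (2 ^ Suc m) y)
      = (\<Sum>y::nat<2 ^ Suc m. (if y = 2 ^ m then of_real (walsh (Suc m) x (2 ^ m) / sqrt 2) else 0)
          + (if y = 2 ^ m - 1 then of_real (walsh (Suc m) x (2 ^ m - 1) / sqrt 2) else 0))"
    unfolding init_state_eq by (intro sum.cong refl) auto
  also have "\<dots> = of_real ((walsh (Suc m) x (2 ^ m) + walsh (Suc m) x (2 ^ m - 1)) / sqrt 2)"
    using spin_indices[of m] by (simp add: sum.distrib add_divide_distrib del: of_real_divide)
  finally show ?thesis
    unfolding hadamard_n_walsh by (simp del: of_real_divide add: of_real_mult[symmetric])
qed

definition pm_sign :: "(nat \<Rightarrow> bool) \<Rightarrow> nat \<Rightarrow> real" where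
  "pm_sign z x = (if z x then -1 else 1)"

lemma oracle_U_pm_sign: "oracle_U z \<psi> x = of_real (pm_sign z x) * \<psi> x"
  unfolding oracle_U_def pm_sign_def by simp

(* 2^m and 2^m - 1 are the positions of the spin states |1/2> and |-1/2> for N = 2^(m+1). *)

definition overlap :: "nat \<Rightarrow> (nat \<Rightarrow> bool) \<Rightarrow> real" where
  "overlap m z = (\<Sum>x<2 ^ Suc m. pm_sign z x * (walsh (Suc m) x (2 ^ m) + walsh (Suc m) x (2 ^ m - 1)))"

lemma norm_oracle_U: "cmod (oracle_U z \<psi> x) = cmod (\<psi> x)"
  unfolding oracle_U_def by (simp add: norm_mult)

definition id_mat :: "nat \<Rightarrow> nat \<Rightarrow> complex" where
  "id_mat i j = (if i = j then 1 else 0)"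

lemma unitary_mat_id_mat: "unitary_mat N id_mat"
  unfolding unitary_mat_def
proof (intro allI impI)
  fix i j
  assume "i < N"
  have "(\<Sum>k<N. cnj (id_mat k i) * id_mat k j) = (\<Sum>k<N. if k = i then of_bool (i = j) else 0)"
    by (intro sum.cong refl) (auto simp: id_mat_def)
  with \<open>i < N\<close> show "(\<Sum>k<N. cnj (id_mat k i) * id_mat k j) = (if i = j then 1 else 0)"
    by simp
qed

lemma apply_mat_id_mat: "y < N \<Longrightarrow> apply_mat N id_mat \<psi> y = \<psi> y"
  unfolding apply_mat_def id_mat_def by (simp add: if_distrib[of "\<lambda>c. c * _"] cong: if_cong)

lemma final_state_id_mat:
  "y < 2 ^ n \<Longrightarrow>
     final_state n id_mat z y = hadamard_n n (oracle_U z (hadamard_n n (init_state (2 ^ n)))) y"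
  unfolding final_state_def by (rule apply_mat_id_mat)

lemma outcome_prob_nonneg: "0 \<le> outcome_prob n V z y"
  by (simp add: outcome_prob_def)

lemma sum_outcome_prob_id_mat: "(\<Sum>y<2 ^ Suc m. outcome_prob (Suc m) id_mat z y) = 1"
proof -
  have "(\<Sum>y<2 ^ Suc m. outcome_prob (Suc m) id_mat z y)
      = (\<Sum>y<2 ^ Suc m.
           (cmod (hadamard_n (Suc m) (oracle_U z (hadamard_n (Suc m) (init_state (2 ^ Suc m)))) y))\<^sup>2)"
    unfolding outcome_prob_def by (simp add: final_state_id_mat)
  also have "\<dots> = 1"
    unfolding hadamard_n_norm norm_oracle_U init_state_norm ..
  finally show ?thesis .
qed

lemma outcome_prob_id_mat_zero:
  "outcome_prob (Suc m) id_mat z 0 = (overlap m z)\<^sup>2 / (2 * (2 ^ Suc m)\<^sup>2)"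
proof -
  let ?N = "(2::real) ^ Suc m"
  have "final_state (Suc m) id_mat z 0
      = hadamard_n (Suc m) (oracle_U z (hadamard_n (Suc m) (init_state (2 ^ Suc m)))) 0"
    by (simp add: final_state_id_mat)
  also have "\<dots> = of_real (1 / sqrt ?N) * (\<Sum>x<2 ^ Suc m. of_real (pm_sign z x
          * ((walsh (Suc m) x (2 ^ m) + walsh (Suc m) x (2 ^ m - 1)) / (sqrt ?N * sqrt 2))))"
    unfolding hadamard_n_walsh[where x = 0]
      oracle_U_pm_sign hadamard_init_state walsh_zero_left by simp
  also have "\<dots> = of_real (overlap m z / (sqrt ?N * sqrt ?N * sqrt 2))"
    unfolding overlap_def
    by (simp add: sum_divide_distrib[symmetric] field_simps del: of_real_divide of_real_mult
        flip: of_real_sum of_real_mult)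
  also have "sqrt ?N * sqrt ?N = ?N"
    by simp
  finally have amplitude: "final_state (Suc m) id_mat z 0 = of_real (overlap m z / (?N * sqrt 2))" .
  show ?thesis
    unfolding outcome_prob_def amplitude norm_of_real power2_abs by (simp add: power_divide power_mult_distrib)
qed

lemma pm_sign_codeword: "pm_sign (codeword n j) x = walsh n x j"
proof -
  have "bdot n x j = 0 \<or> bdot n x j = 1"
    unfolding bdot_def by linarith
  then show ?thesis
    unfolding pm_sign_def codeword_def walsh_def by auto
qed

lemma overlap_codeword:
  assumes "j < 2 ^ Suc m"
  shows "overlap m (codeword (Suc m) j) = 2 ^ Suc m * (of_bool (j = 2 ^ m) + of_bool (j = 2 ^ m - 1))"
  unfolding overlap_def pm_sign_codeword distrib_left sum.distrib
  using walsh_orthogonal[OF assms spin_indices(1)] walsh_orthogonal[OF assms spin_indices(2)]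
  by simp

lemma overlap_diff_le_hamming:
  "\<bar>overlap m z - overlap m v\<bar> \<le> 4 * real (hamming (2 ^ Suc m) z v)"
proof -
  let ?e = "\<lambda>x. walsh (Suc m) x (2 ^ m) + walsh (Suc m) x (2 ^ m - 1)"
  have "\<bar>overlap m z - overlap m v\<bar> = \<bar>\<Sum>x<2 ^ Suc m. (pm_sign z x - pm_sign v x) * ?e x\<bar>"
    unfolding overlap_def by (simp add: sum_subtractf[symmetric] algebra_simps)
  also have "\<dots> \<le> (\<Sum>x<2 ^ Suc m. \<bar>(pm_sign z x - pm_sign v x) * ?e x\<bar>)"
    by (rule sum_abs)
  also have "\<dots> \<le> (\<Sum>x<2 ^ Suc m. 4 * of_bool (z x \<noteq> v x))"
  proof (rule sum_mono)
    fix x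
    have "\<bar>?e x\<bar> \<le> 2"
      using abs_triangle_ineq[of "walsh (Suc m) x (2 ^ m)" "walsh (Suc m) x (2 ^ m - 1)"] by simp
    then show "\<bar>(pm_sign z x - pm_sign v x) * ?e x\<bar> \<le> 4 * of_bool (z x \<noteq> v x)"
      by (auto simp: pm_sign_def abs_mult)
  qed
  also have "\<dots> = 4 * real (hamming (2 ^ Suc m) z v)"
    unfolding hamming_def by (simp flip: sum_distrib_left add: of_bool_def sum.If_cases Int_def)
  finally show ?thesis .
qed

lemma outcome_prob_zero_setA:
  assumes "z \<in> setA (Suc m)"
  shows "9 / 32 \<le> outcome_prob (Suc m) id_mat z 0"
proof -
  let ?N = "(2::real) ^ Suc m"
  have "real (hamming (2 ^ Suc m) z (codeword (Suc m) (2 ^ m - 1))) < ?N / 16"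
    using assms unfolding setA_def Xi_def by simp
  moreover have "overlap m (codeword (Suc m) (2 ^ m - 1)) = ?N"
    using overlap_codeword[OF spin_indices(2)] spin_indices(3)[of m] by simp
  ultimately have "3 / 4 * ?N \<le> overlap m z"
    using overlap_diff_le_hamming[of m z "codeword (Suc m) (2 ^ m - 1)"] by linarith
  then have "(3 / 4 * ?N)\<^sup>2 \<le> (overlap m z)\<^sup>2"
    by (intro power_mono) auto
  then show ?thesis
    unfolding outcome_prob_id_mat_zero by (simp add: field_simps power2_eq_square)
qed

lemma outcome_prob_zero_setB:
  assumes "z \<in> setB (Suc m)" and "1 \<le> m"
  shows "outcome_prob (Suc m) id_mat z 0 \<le> 1 / 32"
proof -
  let ?N = "(2::real) ^ Suc m"
  obtain k where k: "k \<le> 2 ^ m - 2"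
    and close: "real (hamming (2 ^ Suc m) z (codeword (Suc m) k)) < ?N / 16"
    using assms(1) unfolding setB_def Xi_def by auto
  have "(2::nat) \<le> 2 ^ m"
    using power_increasing[OF \<open>1 \<le> m\<close>, of "2::nat"] by simp
  with k have "k < 2 ^ Suc m" "k \<noteq> 2 ^ m" "k \<noteq> 2 ^ m - 1"
    by auto
  then have "overlap m (codeword (Suc m) k) = 0"
    using overlap_codeword[of k m] by simp
  then have "\<bar>overlap m z\<bar> \<le> ?N / 4"
    using overlap_diff_le_hamming[of m z "codeword (Suc m) k"] close by linarith
  then have "\<bar>overlap m z\<bar>\<^sup>2 \<le> (?N / 4)\<^sup>2"
    by (intro power_mono) auto
  then show ?thesis
    unfolding outcome_prob_id_mat_zero by (simp add: field_simps power2_eq_square)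
qed

lemma runs_prob_id_mat_threshold_error:
  assumes gap: "outcome_prob (Suc m) id_mat z 0 \<le> 1 / 32 \<or> 9 / 32 \<le> outcome_prob (Suc m) id_mat z 0"
    and q_pos: "0 < q"
  shows "runs_prob (Suc m) id_mat z q
           (\<lambda>ys. (5 / 32 * q \<le> real (count_list ys 0)) \<noteq> (9 / 32 \<le> outcome_prob (Suc m) id_mat z 0))
         \<le> 16 / q"
proof -
  have threshold: "(1 / 32 + 9 / 32) / 2 = (5 / 32 :: real)"
    by simp
  show ?thesis
    unfolding runs_prob_def
    using threshold_test_error[OF sum_outcome_prob_id_mat _ outcome_prob_nonneg _ gap q_pos,
        unfolded threshold]
    by (simp add: power2_eq_square)
qed

lemma runs_prob_id_mat_decides:
  assumes "z \<in> setA (Suc m) \<union> setB (Suc m)" and "1 \<le> m" and "0 < q"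
  shows "runs_prob (Suc m) id_mat z q
           (\<lambda>ys. (5 / 32 * q \<le> real (count_list ys 0)) \<noteq> (z \<in> setA (Suc m))) \<le> 16 / q"
proof -
  have in_setA: "z \<in> setA (Suc m) \<longleftrightarrow> 9 / 32 \<le> outcome_prob (Suc m) id_mat z 0"
    and gap: "outcome_prob (Suc m) id_mat z 0 \<le> 1 / 32 \<or> 9 / 32 \<le> outcome_prob (Suc m) id_mat z 0"
    using assms(1) outcome_prob_zero_setA outcome_prob_zero_setB[OF _ \<open>1 \<le> m\<close>] by force+
  show ?thesis
    unfolding in_setA using runs_prob_id_mat_threshold_error[OF gap \<open>0 < q\<close>] .
qed

theorem claim2:
  fixes \<delta> :: real
  assumes "\<delta> > 0"
  shows "\<exists>q::nat. \<forall>n::nat. n \<ge> 2 \<longrightarrow>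
           (\<exists>V decide. unitary_mat (2^n) V \<and>
              (\<forall>z \<in> setA n \<union> setB n.
                 runs_prob n V z q (\<lambda>ys. decide ys \<noteq> (z \<in> setA n)) \<le> \<delta>))"
proof -
  obtain q :: nat where q: "16 / \<delta> < q"
    using reals_Archimedean2 by blast
  moreover have "0 < 16 / \<delta>"
    using \<open>\<delta> > 0\<close> by simp
  ultimately have "0 < real q"
    by linarith
  then have q_pos: "0 < q" and error_le: "16 / q \<le> \<delta>"
    using q \<open>\<delta> > 0\<close> by (simp_all add: field_simps)
  define decide where "decide ys \<longleftrightarrow> 5 / 32 * q \<le> real (count_list ys 0)" for ys :: "nat list"
  show ?thesis
  proof (intro exI[of _ q] allI impI)
    fix n :: nat
    assume "2 \<le> n"
    then obtain m where n: "n = Suc m" and "1 \<le> m"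
      by (cases n) auto
    have "runs_prob n id_mat z q (\<lambda>ys. decide ys \<noteq> (z \<in> setA n)) \<le> \<delta>"
      if "z \<in> setA n \<union> setB n" for z
      using runs_prob_id_mat_decides[OF that[unfolded n] \<open>1 \<le> m\<close> q_pos] error_le
      unfolding n decide_def by linarith
    then show "\<exists>V decide. unitary_mat (2 ^ n) V \<and>
        (\<forall>z \<in> setA n \<union> setB n. runs_prob n V z q (\<lambda>ys. decide ys \<noteq> (z \<in> setA n)) \<le> \<delta>)"
      using unitary_mat_id_mat by blast
  qed
qed

end
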